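(* Let $G=G_0*_HG_1$ be a nondegenerate free product with amalgamation and suppose that $\ker G$ is trivial. Then $G$ is a weak$^*$ Powers group.
   Context: The amalgam is nondegenerate if $([G_0:H]-1)([G_1:H]-1)\ge2$, and $\ker G=\bigcap_{g\in G}gHg^{-1}$. A group $G$ is a weak$^*$ Powers group if for every $f\in G\setminus\{e\}$ and every integer $k\ge1$ there exist a partition $G=D\sqcup E$ and elements $g_1,\dots,g_k\in G$ with $fD\cap D=\varnothing$ and $g_iE\cap g_jE=\varnothing$ for all distinct $i,j$. *)

theory Defs
  imports "HOL-Algebra.Algebra" "HOL-Library.Extended_Nat"
begin

definition subgroup_index :: "('a, 'b) monoid_scheme \<Rightarrow> 'a set \<Rightarrow> 'a set \<Rightarrow> enat" where
  "subgroup_index G K H =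
     (let C = {a <#\<^bsub>G\<^esub> H | a. a \<in> K} in if finite C then enat (card C) else \<infinity>)"

definition list_prod :: "('a, 'b) monoid_scheme \<Rightarrow> 'a list \<Rightarrow> 'a" where
  "list_prod G ws = foldr (\<lambda>x y. x \<otimes>\<^bsub>G\<^esub> y) ws \<one>\<^bsub>G\<^esub>"

definition reduced_word :: "'a set \<Rightarrow> 'a set \<Rightarrow> 'a set \<Rightarrow> 'a list \<Rightarrow> bool" where
  "reduced_word G0 G1 H ws \<longleftrightarrow>
     (\<forall>i < length ws. ws ! i \<in> (G0 - H) \<union> (G1 - H)) \<and>
     (\<forall>i. Suc i < length ws \<longrightarrow>
        \<not> (ws ! i \<in> G0 \<and> ws ! Suc i \<in> G0) \<and> \<not> (ws ! i \<in> G1 \<and> ws ! Suc i \<in> G1))"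

(* G is the (internal) free product with amalgamation G0 *_H G1:
   G0, G1 subgroups with G0 \<inter> G1 = H, generating G, and every nonempty reduced
   word represents a nontrivial element (normal form theorem). *)
definition amalgamated_product :: "('a, 'b) monoid_scheme \<Rightarrow> 'a set \<Rightarrow> 'a set \<Rightarrow> 'a set \<Rightarrow> bool" where
  "amalgamated_product G G0 G1 H \<longleftrightarrow>
     group G \<and> subgroup G0 G \<and> subgroup G1 G \<and> H = G0 \<inter> G1 \<and>
     generate G (G0 \<union> G1) = carrier G \<and>
     (\<forall>ws. ws \<noteq> [] \<and> reduced_word G0 G1 H ws \<longrightarrow> list_prod G ws \<noteq> \<one>\<^bsub>G\<^esub>)"

definition nondegenerate_amalgam :: "('a, 'b) monoid_scheme \<Rightarrow> 'a set \<Rightarrow> 'a set \<Rightarrow> 'a set \<Rightarrow> bool" where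
  "nondegenerate_amalgam G G0 G1 H \<longleftrightarrow>
     (subgroup_index G G0 H - 1) * (subgroup_index G G1 H - 1) \<ge> 2"

definition amalgam_kernel :: "('a, 'b) monoid_scheme \<Rightarrow> 'a set \<Rightarrow> 'a set" where
  "amalgam_kernel G H = (\<Inter>g \<in> carrier G. (g <#\<^bsub>G\<^esub> H) #>\<^bsub>G\<^esub> inv\<^bsub>G\<^esub> g)"

definition weak_star_powers :: "('a, 'b) monoid_scheme \<Rightarrow> bool" where
  "weak_star_powers G \<longleftrightarrow>
     (\<forall>f \<in> carrier G - {\<one>\<^bsub>G\<^esub>}. \<forall>k::nat. k \<ge> 1 \<longrightarrow>
        (\<exists>D E (g :: nat \<Rightarrow> 'a).
           D \<union> E = carrier G \<and> D \<inter> E = {} \<and>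
           (f <#\<^bsub>G\<^esub> D) \<inter> D = {} \<and>
           (\<forall>i \<in> {1..k}. g i \<in> carrier G) \<and>
           (\<forall>i \<in> {1..k}. \<forall>j \<in> {1..k}. i \<noteq> j \<longrightarrow>
              (g i <#\<^bsub>G\<^esub> E) \<inter> (g j <#\<^bsub>G\<^esub> E) = {})))"

end

theory Submission
  imports Defs
begin

(*
  The reduced words give a partition of G into H, the set L0 of elements whose normal form
  starts in G0 - H, and the set L1 of those starting in G1 - H. For a in G0 - H the set
  D = a (H \<union> L1) lies in L0 and its complement is a L0. If f = x t with x in G0,
  a\<inverse> x \<notin> H and t L0 \<subseteq> L1 (for instance t a word beginning and ending in G1), then
  f D \<subseteq> x L1 = a (a\<inverse> x) L1 \<subseteq> a L0, so f D and D are disjoint. Up to exchanging G0 and G1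
  and inverting f, every element outside H has this shape, choosing a outside x H when
  [G0 : H] \<ge> 3. Nondegeneracy also yields infinitely many pairwise disjoint translates
  (b a)^i c L0 of L0 (with a, b, c and b\<inverse> c outside H), hence of the complement a L0 of D.
  Elements of H are conjugated out of H, which is possible since ker G is trivial.
*)

lemma l_coset_mem_iff: "x \<in> a <#\<^bsub>G\<^esub> S \<longleftrightarrow> (\<exists>s\<in>S. x = a \<otimes>\<^bsub>G\<^esub> s)"
  unfolding l_coset_def by auto

lemma l_coset_memE:
  assumes "x \<in> a <#\<^bsub>G\<^esub> S"
  obtains s where "s \<in> S" and "x = a \<otimes>\<^bsub>G\<^esub> s"
  using assms unfolding l_coset_def by auto

lemma l_coset_mono: "A \<subseteq> B \<Longrightarrow> a <#\<^bsub>G\<^esub> A \<subseteq> a <#\<^bsub>G\<^esub> B"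
  unfolding l_coset_def by auto

context group
begin

lemma l_coset_Diff_carrier:
  assumes "S \<subseteq> carrier G" and "a \<in> carrier G"
  shows "a <# (carrier G - S) = carrier G - (a <# S)"
proof
  show "a <# (carrier G - S) \<subseteq> carrier G - (a <# S)"
    using assms by (auto simp: l_coset_mem_iff) (metis l_cancel subsetD)
  show "carrier G - (a <# S) \<subseteq> a <# (carrier G - S)"
  proof
    fix x assume x: "x \<in> carrier G - (a <# S)"
    then have "x = a \<otimes> (inv a \<otimes> x)" and "inv a \<otimes> x \<notin> S"
      using assms(2) by (auto simp: l_coset_mem_iff simp flip: m_assoc)
    then show "x \<in> a <# (carrier G - S)"
      using x assms(2) by (auto simp: l_coset_mem_iff)
  qed
qed

lemma l_coset_disjoint:
  assumes "A \<inter> B = {}" and "A \<subseteq> carrier G" and "B \<subseteq> carrier G" and "c \<in> carrier G"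
  shows "(c <# A) \<inter> (c <# B) = {}"
proof -
  have "c <# A \<subseteq> c <# (carrier G - B)"
    using assms(1,2) by (intro l_coset_mono) blast
  then show ?thesis
    using l_coset_Diff_carrier[OF assms(3,4)] by blast
qed

lemma l_coset_inv_cancel: "S \<subseteq> carrier G \<Longrightarrow> a \<in> carrier G \<Longrightarrow> inv a <# (a <# S) = S"
  by (simp add: lcos_m_assoc lcos_mult_one)

lemma conj_in_conj_coset:
  assumes "inv g \<otimes> f \<otimes> g \<in> H" and "f \<in> carrier G" and "g \<in> carrier G"
  shows "f \<in> (g <# H) #> inv g"
proof -
  have "f = g \<otimes> (inv g \<otimes> f \<otimes> g) \<otimes> inv g"
    using assms(2,3) by (simp add: m_assoc) (simp flip: m_assoc)
  then show ?thesis
    using assms(1) unfolding r_coset_def l_coset_def by blast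
qed

lemma subgroup_mult_left_iff:
  assumes "subgroup K G" and "h \<in> K" and "x \<in> carrier G"
  shows "h \<otimes> x \<in> K \<longleftrightarrow> x \<in> K"
  using assms subgroup.m_closed[OF assms(1) subgroup.m_inv_closed[OF assms(1,2)], of "h \<otimes> x"]
    subgroup.m_closed[OF assms(1,2)] subgroup.mem_carrier[OF assms(1,2)]
  by (auto simp flip: m_assoc)

lemma subgroup_mult_right_iff:
  assumes "subgroup K G" and "h \<in> K" and "x \<in> carrier G"
  shows "x \<otimes> h \<in> K \<longleftrightarrow> x \<in> K"
  using assms subgroup.m_closed[OF assms(1) _ subgroup.m_inv_closed[OF assms(1,2)], of "x \<otimes> h"]
    subgroup.m_closed[OF assms(1) _ assms(2)] subgroup.mem_carrier[OF assms(1,2)]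
  by (auto simp: m_assoc)

lemma subgroup_inv_iff: "subgroup K G \<Longrightarrow> x \<in> carrier G \<Longrightarrow> inv x \<in> K \<longleftrightarrow> x \<in> K"
  using subgroup.m_inv_closed[of K G "inv x"] subgroup.m_inv_closed[of K G x] by auto

end

section \<open>Partitions witnessing the weak* Powers property\<close>

definition has_disjoint_translates :: "('a, 'b) monoid_scheme \<Rightarrow> 'a set \<Rightarrow> bool" where
  "has_disjoint_translates G L \<longleftrightarrow>
     (\<exists>g :: nat \<Rightarrow> 'a. (\<forall>i. g i \<in> carrier G) \<and>
        (\<forall>i j. i \<noteq> j \<longrightarrow> (g i <#\<^bsub>G\<^esub> L) \<inter> (g j <#\<^bsub>G\<^esub> L) = {}))"

(* The pair (D, carrier G - D) is the partition D \<union> E of a weak* Powers group; a single infinite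
   family of disjoint translates of E serves every k at once. *)
definition weak_powers_partition :: "('a, 'b) monoid_scheme \<Rightarrow> 'a \<Rightarrow> 'a set \<Rightarrow> bool" where
  "weak_powers_partition G f D \<longleftrightarrow>
     D \<subseteq> carrier G \<and> (f <#\<^bsub>G\<^esub> D) \<inter> D = {} \<and> has_disjoint_translates G (carrier G - D)"

context group
begin

lemma has_disjoint_translates_mono:
  assumes "has_disjoint_translates G L" and "c \<in> carrier G" and "M \<subseteq> carrier G"
    and "c <# M \<subseteq> L"
  shows "has_disjoint_translates G M"
proof -
  obtain g :: "nat \<Rightarrow> 'a" where g: "\<forall>i. g i \<in> carrier G"
    and disj: "\<forall>i j. i \<noteq> j \<longrightarrow> (g i <# L) \<inter> (g j <# L) = {}"
    using assms(1) unfolding has_disjoint_translates_def by blast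
  have sub: "(g i \<otimes> c) <# M \<subseteq> g i <# L" for i
    using lcos_m_assoc[OF assms(3) g[rule_format] assms(2)] l_coset_mono[OF assms(4)] by metis
  have "((g i \<otimes> c) <# M) \<inter> ((g j \<otimes> c) <# M) = {}" if "i \<noteq> j" for i j
    using disj sub[of i] sub[of j] that by blast
  then show ?thesis
    unfolding has_disjoint_translates_def
    using g assms(2) by (intro exI[of _ "\<lambda>i. g i \<otimes> c"]) auto
qed

lemma has_disjoint_translates_l_coset:
  "has_disjoint_translates G L \<Longrightarrow> L \<subseteq> carrier G \<Longrightarrow> a \<in> carrier G
   \<Longrightarrow> has_disjoint_translates G (a <# L)"
  using has_disjoint_translates_mono[of L "inv a" "a <# L"]
  by (simp add: l_coset_inv_cancel l_coset_subset_G)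

lemma weak_star_powersI:
  assumes "\<And>f. f \<in> carrier G \<Longrightarrow> f \<noteq> \<one> \<Longrightarrow> \<exists>D. weak_powers_partition G f D"
  shows "weak_star_powers G"
  unfolding weak_star_powers_def
proof (intro ballI allI impI)
  fix f and k :: nat assume "f \<in> carrier G - {\<one>}"
  then obtain D where "D \<subseteq> carrier G" "(f <# D) \<inter> D = {}"
    and "has_disjoint_translates G (carrier G - D)"
    using assms unfolding weak_powers_partition_def by blast
  moreover from this obtain g :: "nat \<Rightarrow> 'a" where "\<forall>i. g i \<in> carrier G"
    "\<forall>i j. i \<noteq> j \<longrightarrow> (g i <# (carrier G - D)) \<inter> (g j <# (carrier G - D)) = {}"
    unfolding has_disjoint_translates_def by blast
  ultimately show "\<exists>D E g. D \<union> E = carrier G \<and> D \<inter> E = {} \<and> (f <# D) \<inter> D = {} \<and>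
      (\<forall>i\<in>{1..k}. g i \<in> carrier G) \<and>
      (\<forall>i\<in>{1..k}. \<forall>j\<in>{1..k}. i \<noteq> j \<longrightarrow> (g i <# E) \<inter> (g j <# E) = {})"
    by (intro exI[of _ D] exI[of _ "carrier G - D"] exI[of _ g]) auto
qed

lemma weak_powers_partition_inv:
  assumes "weak_powers_partition G f D" and "f \<in> carrier G"
  shows "weak_powers_partition G (inv f) D"
proof -
  have D: "D \<subseteq> carrier G" and disj: "(f <# D) \<inter> D = {}"
    using assms(1) unfolding weak_powers_partition_def by auto
  have "(inv f <# D) \<inter> D = {}"
  proof (rule ccontr)
    assume "(inv f <# D) \<inter> D \<noteq> {}"
    then obtain x where "x \<in> inv f <# D" and x: "x \<in> D"
      by blast
    from this(1) obtain d where d: "d \<in> D" and "x = inv f \<otimes> d"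
      by (rule l_coset_memE)
    then have "d = f \<otimes> x"
      using D assms(2) by (auto simp flip: m_assoc)
    then have "d \<in> f <# D"
      using x unfolding l_coset_def by auto
    then show False
      using d disj by auto
  qed
  then show ?thesis
    using assms(1) unfolding weak_powers_partition_def by auto
qed

lemma weak_powers_partition_conj:
  assumes "weak_powers_partition G (inv g \<otimes> f \<otimes> g) D"
    and "f \<in> carrier G" and "g \<in> carrier G"
  shows "weak_powers_partition G f (g <# D)"
proof -
  have D: "D \<subseteq> carrier G" and disj: "((inv g \<otimes> f \<otimes> g) <# D) \<inter> D = {}"
    and tr: "has_disjoint_translates G (carrier G - D)"
    using assms(1) unfolding weak_powers_partition_def by auto
  have compl: "carrier G - (g <# D) = g <# (carrier G - D)"
    using l_coset_Diff_carrier[OF D assms(3)] by simp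
  have "f <# (g <# D) = g <# ((inv g \<otimes> f \<otimes> g) <# D)"
    using D assms(2,3) by (simp add: lcos_m_assoc m_assoc) (simp flip: m_assoc)
  also have "\<dots> \<subseteq> g <# (carrier G - D)"
    using disj l_coset_subset_G[OF D, of "inv g \<otimes> f \<otimes> g"] assms(2,3)
    by (intro l_coset_mono) auto
  finally have "(f <# (g <# D)) \<inter> (g <# D) = {}"
    using compl by auto
  then show ?thesis
    unfolding weak_powers_partition_def
    using l_coset_subset_G[OF D assms(3)] has_disjoint_translates_l_coset[OF tr _ assms(3)] compl
    by auto
qed

end

lemma nat_indices_of_nondegenerate:
  fixes m n :: nat
  assumes "2 \<le> (m - 1) * (n - 1)"
  shows "2 \<le> m \<and> 2 \<le> n \<and> (3 \<le> m \<or> 3 \<le> n)"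
proof -
  have "m - 1 \<noteq> 0" and "n - 1 \<noteq> 0"
    using assms by auto
  moreover have "\<not> (m - 1 \<le> 1 \<and> n - 1 \<le> 1)"
    using mult_le_mono[of "m - 1" 1 "n - 1" 1] assms by auto
  ultimately show ?thesis
    by auto
qed

lemma enat_indices_of_nondegenerate:
  fixes m n :: enat
  assumes "2 \<le> (m - 1) * (n - 1)"
  shows "2 \<le> m \<and> 2 \<le> n \<and> (3 \<le> m \<or> 3 \<le> n)"
proof (cases m; cases n)
  fix a b assume "m = enat a" "n = enat b"
  then show ?thesis
    using assms nat_indices_of_nondegenerate[of a b]
    by (simp add: one_enat_def numeral_eq_enat)
next
  fix a assume "m = enat a" "n = \<infinity>"
  then show ?thesis
    using assms by (simp add: one_enat_def zero_enat_def numeral_eq_enat split: if_splits)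
next
  fix b assume "m = \<infinity>" "n = enat b"
  then show ?thesis
    using assms by (simp add: one_enat_def zero_enat_def numeral_eq_enat split: if_splits)
qed simp

context group
begin

lemma subgroup_index_avoids_cosets:
  assumes "enat (card F) < subgroup_index G K H" and "finite F"
  obtains a where "a \<in> K" and "a <# H \<notin> F"
proof -
  have "\<not> {a <# H | a. a \<in> K} \<subseteq> F"
  proof
    assume sub: "{a <# H | a. a \<in> K} \<subseteq> F"
    then have "finite {a <# H | a. a \<in> K}"
      using assms(2) finite_subset by blast
    moreover have "card {a <# H | a. a \<in> K} \<le> card F"
      using sub assms(2) by (rule card_mono[rotated])
    ultimately show False
      using assms(1) unfolding subgroup_index_def Let_def by simp
  qed
  then show ?thesis
    using that by auto
qed

lemma not_in_subgroup_if_l_coset_ne_one: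
  assumes "subgroup H G" and "a <# H \<noteq> \<one> <# H"
  shows "a \<notin> H"
proof
  assume "a \<in> H"
  then have "a \<in> \<one> <# H"
    using lcos_mult_one[OF subgroup.subset[OF assms(1)]] by simp
  then show False
    using l_repr_independence[OF _ one_closed assms(1)] assms(2) by simp
qed

lemma subgroup_index_ge_2:
  assumes "subgroup H G" and "2 \<le> subgroup_index G K H"
  obtains a where "a \<in> K" and "a \<notin> H"
proof -
  have "enat (card {\<one> <# H}) < subgroup_index G K H"
    using assms(2) by (simp add: one_enat_def numeral_eq_enat less_le_trans[of _ "enat 2"])
  then obtain a where "a \<in> K" "a <# H \<noteq> \<one> <# H"
    by (rule subgroup_index_avoids_cosets) auto
  then show ?thesis
    using that not_in_subgroup_if_l_coset_ne_one[OF assms(1)] by simp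
qed

lemma subgroup_index_ge_3:
  assumes "subgroup H G" and "K \<subseteq> carrier G" and "3 \<le> subgroup_index G K H"
    and "x \<in> carrier G"
  obtains a where "a \<in> K" and "a \<notin> H" and "inv a \<otimes> x \<notin> H"
proof -
  have "card {\<one> <# H, x <# H} \<le> 2"
    by (cases "\<one> <# H = x <# H") auto
  then have "enat (card {\<one> <# H, x <# H}) < subgroup_index G K H"
    using assms(3) by (simp add: numeral_eq_enat le_less_trans[of _ "enat 2"] less_le_trans[of _ "enat 3"])
  then obtain a where a: "a \<in> K" "a <# H \<noteq> \<one> <# H" "a <# H \<noteq> x <# H"
    by (rule subgroup_index_avoids_cosets) auto
  have "inv a \<otimes> x \<notin> H"
  proof
    assume "inv a \<otimes> x \<in> H"
    moreover have a_carrier: "a \<in> carrier G"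
      using assms(2) a(1) by auto
    ultimately have "x \<in> a <# H"
      using subgroup.lcos_module_rev[OF assms(1) is_group _ assms(4)] by simp
    then show False
      using l_repr_independence[OF _ a_carrier assms(1)] a(3) by simp
  qed
  then show ?thesis
    using that a not_in_subgroup_if_l_coset_ne_one[OF assms(1)] by simp
qed

end

section \<open>Reduced words\<close>

lemma reduced_word_swap: "reduced_word B A H ws = reduced_word A B H ws"
  unfolding reduced_word_def by blast

lemma reduced_word_Nil [simp]: "reduced_word A B H []"
  unfolding reduced_word_def by simp

lemma reduced_word_Cons:
  "reduced_word A B H (w # ws) \<longleftrightarrow>
     w \<in> (A - H) \<union> (B - H) \<and> reduced_word A B H ws \<and>
     (ws \<noteq> [] \<longrightarrow> \<not> (w \<in> A \<and> hd ws \<in> A) \<and> \<not> (w \<in> B \<and> hd ws \<in> B))"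
proof -
  have letters: "(\<forall>i < length (w # ws). P ((w # ws) ! i)) \<longleftrightarrow> P w \<and> (\<forall>i < length ws. P (ws ! i))"
    for P
    by (auto simp: less_Suc_eq_0_disj)
  have pairs: "(\<forall>i. Suc i < length (w # ws) \<longrightarrow> Q ((w # ws) ! i) ((w # ws) ! Suc i)) \<longleftrightarrow>
      (ws \<noteq> [] \<longrightarrow> Q w (hd ws)) \<and> (\<forall>i. Suc i < length ws \<longrightarrow> Q (ws ! i) (ws ! Suc i))" for Q
    by (cases ws) (auto simp: nth_Cons split: nat.split)
  show ?thesis
    unfolding reduced_word_def
    using letters[of "\<lambda>x. x \<in> (A - H) \<union> (B - H)"]
      pairs[of "\<lambda>x y. \<not> (x \<in> A \<and> y \<in> A) \<and> \<not> (x \<in> B \<and> y \<in> B)"] by blast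
qed

lemma reduced_word_append:
  "reduced_word A B H (ws @ vs) \<longleftrightarrow>
     reduced_word A B H ws \<and> reduced_word A B H vs \<and>
     (ws \<noteq> [] \<and> vs \<noteq> [] \<longrightarrow>
        \<not> (last ws \<in> A \<and> hd vs \<in> A) \<and> \<not> (last ws \<in> B \<and> hd vs \<in> B))"
  by (induction ws) (auto simp: reduced_word_Cons)

lemma list_prod_Nil [simp]: "list_prod G [] = \<one>\<^bsub>G\<^esub>"
  by (simp add: list_prod_def)

lemma list_prod_Cons [simp]: "list_prod G (w # ws) = w \<otimes>\<^bsub>G\<^esub> list_prod G ws"
  by (simp add: list_prod_def)

section \<open>Normal forms in an amalgamated product\<close>

definition starting_in :: "('a, 'b) monoid_scheme \<Rightarrow> 'a set \<Rightarrow> 'a set \<Rightarrow> 'a set \<Rightarrow> 'a set" where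
  "starting_in G A B H =
     {list_prod G ws | ws. ws \<noteq> [] \<and> reduced_word A B H ws \<and> hd ws \<in> A}"

lemma amalgamated_product_swap:
  "amalgamated_product G G0 G1 H \<Longrightarrow> amalgamated_product G G1 G0 H"
  unfolding amalgamated_product_def by (auto simp: reduced_word_swap Un_commute Int_commute)

locale amalgam = group G for G (structure) +
  fixes G0 G1 H :: "'a set"
  assumes amalgamated: "amalgamated_product G G0 G1 H"
begin

abbreviation "L0 \<equiv> starting_in G G0 G1 H"
abbreviation "L1 \<equiv> starting_in G G1 G0 H"
abbreviation "R \<equiv> reduced_word G0 G1 H"

lemma subgroup_G0: "subgroup G0 G"
  and subgroup_G1: "subgroup G1 G"
  and H_eq: "H = G0 \<inter> G1"
  and generate_G0_G1: "generate G (G0 \<union> G1) = carrier G"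
  and list_prod_reduced_ne_one: "ws \<noteq> [] \<Longrightarrow> R ws \<Longrightarrow> list_prod G ws \<noteq> \<one>"
  using amalgamated unfolding amalgamated_product_def by auto

lemma amalgam_swap: "amalgam G G1 G0 H"
  by (rule amalgam.intro[OF is_group]) (unfold_locales, rule amalgamated_product_swap[OF amalgamated])

lemma subgroup_H: "subgroup H G"
  using H_eq subgroup_G0 subgroup_G1 subgroups_Inter_pair by auto

lemma G0_carrier: "G0 \<subseteq> carrier G"
  and G1_carrier: "G1 \<subseteq> carrier G"
  and H_carrier: "H \<subseteq> carrier G"
  using subgroup_G0 subgroup_G1 subgroup_H by (auto dest: subgroup.subset)

lemma letter_not_in_H: "R ws \<Longrightarrow> w \<in> set ws \<Longrightarrow> w \<notin> H"
  and letter_in_G0_iff: "R ws \<Longrightarrow> w \<in> set ws \<Longrightarrow> w \<in> G0 \<longleftrightarrow> w \<notin> G1"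
  unfolding reduced_word_def in_set_conv_nth using H_eq by blast+

lemma letters_carrier: "R ws \<Longrightarrow> set ws \<subseteq> carrier G"
  using G0_carrier G1_carrier unfolding reduced_word_def by (force simp: in_set_conv_nth)

lemma list_prod_closed: "set ws \<subseteq> carrier G \<Longrightarrow> list_prod G ws \<in> carrier G"
  by (induction ws) auto

lemma list_prod_append:
  "set ws \<subseteq> carrier G \<Longrightarrow> set vs \<subseteq> carrier G \<Longrightarrow>
   list_prod G (ws @ vs) = list_prod G ws \<otimes> list_prod G vs"
  by (induction ws) (auto simp: m_assoc list_prod_closed)

lemma starting_in_G0_iff:
  "y \<in> L0 \<longleftrightarrow> (\<exists>ws. y = list_prod G ws \<and> ws \<noteq> [] \<and> R ws \<and> hd ws \<in> G0)"
  unfolding starting_in_def by auto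

lemma starting_in_G1_iff:
  "y \<in> L1 \<longleftrightarrow> (\<exists>ws. y = list_prod G ws \<and> ws \<noteq> [] \<and> R ws \<and> hd ws \<in> G1)"
  unfolding starting_in_def by (auto simp: reduced_word_swap)

lemma L0_carrier: "L0 \<subseteq> carrier G"
  using list_prod_closed letters_carrier by (auto simp: starting_in_G0_iff)

lemma L1_carrier: "L1 \<subseteq> carrier G"
  using list_prod_closed letters_carrier by (auto simp: starting_in_G1_iff)

definition inv_word :: "'a list \<Rightarrow> 'a list" where
  "inv_word ws = rev (map (\<lambda>x. inv x) ws)"

lemma list_prod_inv_word:
  "set ws \<subseteq> carrier G \<Longrightarrow> list_prod G (inv_word ws) = inv (list_prod G ws)"
proof (induction ws)
  case (Cons w ws)
  then have "set (inv_word ws) \<subseteq> carrier G"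
    by (auto simp: inv_word_def)
  then show ?case
    using Cons list_prod_closed[of ws]
    by (simp add: inv_word_def list_prod_append inv_mult_group)
qed (simp add: inv_word_def)

lemma inv_word_hd_last:
  "ws \<noteq> [] \<Longrightarrow> inv_word ws \<noteq> [] \<and> hd (inv_word ws) = inv (last ws) \<and> last (inv_word ws) = inv (hd ws)"
  by (simp add: inv_word_def last_rev last_map hd_map hd_rev)

lemma reduced_inv_word: "R ws \<Longrightarrow> R (inv_word ws)"
proof (induction ws)
  case (Cons w ws)
  have w: "w \<in> carrier G" "w \<notin> H" "w \<in> G0 \<longleftrightarrow> w \<notin> G1"
    using letters_carrier[OF Cons.prems] letter_not_in_H[OF Cons.prems]
      letter_in_G0_iff[OF Cons.prems] by auto
  have ws: "R ws"
    and adjacent: "ws \<noteq> [] \<Longrightarrow> \<not> (w \<in> G0 \<and> hd ws \<in> G0) \<and> \<not> (w \<in> G1 \<and> hd ws \<in> G1)"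
    using Cons.prems by (auto simp: reduced_word_Cons)
  have "ws \<noteq> [] \<Longrightarrow> hd ws \<in> carrier G"
    using letters_carrier[OF ws] hd_in_set by blast
  moreover have "inv_word ws = [] \<longleftrightarrow> ws = []"
    by (simp add: inv_word_def)
  moreover have "R [inv w]"
    using w subgroup_inv_iff[OF subgroup_G0] subgroup_inv_iff[OF subgroup_G1]
      subgroup_inv_iff[OF subgroup_H] by (auto simp: reduced_word_Cons)
  ultimately have "R (inv_word ws @ [inv w])"
    using Cons.IH[OF ws] adjacent inv_word_hd_last[of ws] w(1)
      subgroup_inv_iff[OF subgroup_G0] subgroup_inv_iff[OF subgroup_G1]
    by (auto simp: reduced_word_append)
  then show ?case
    by (simp add: inv_word_def)
qed (simp add: inv_word_def)

lemma reduced_word_mult_hd: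
  assumes "h \<in> H" and "ws \<noteq> []" and "R ws"
  shows "R ((h \<otimes> hd ws) # tl ws)"
    and "h \<otimes> hd ws \<in> G0 \<longleftrightarrow> hd ws \<in> G0"
    and "list_prod G ((h \<otimes> hd ws) # tl ws) = h \<otimes> list_prod G ws"
proof -
  obtain w vs where ws: "ws = w # vs"
    using assms(2) by (cases ws) auto
  have w: "w \<in> carrier G" and vs: "set vs \<subseteq> carrier G"
    using letters_carrier[OF assms(3)] ws by auto
  have iff: "h \<otimes> w \<in> K \<longleftrightarrow> w \<in> K" if "subgroup K G" "H \<subseteq> K" for K
    using subgroup_mult_left_iff[OF that(1) _ w] assms(1) that(2) by auto
  have "H \<subseteq> G0" "H \<subseteq> G1"
    using H_eq by auto
  note iffs = iff[OF subgroup_G0 this(1)] iff[OF subgroup_G1 this(2)] iff[OF subgroup_H order.refl]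
  show "R ((h \<otimes> hd ws) # tl ws)"
    using assms(3) iffs unfolding ws reduced_word_Cons by simp
  show "h \<otimes> hd ws \<in> G0 \<longleftrightarrow> hd ws \<in> G0"
    using iffs ws by simp
  have "h \<in> carrier G"
    using assms(1) H_carrier by auto
  then show "list_prod G ((h \<otimes> hd ws) # tl ws) = h \<otimes> list_prod G ws"
    using ws w list_prod_closed[OF vs] by (simp add: m_assoc)
qed

lemma H_mult_L0: "h \<in> H \<Longrightarrow> y \<in> L0 \<Longrightarrow> h \<otimes> y \<in> L0"
  unfolding starting_in_G0_iff by (metis reduced_word_mult_hd list.sel(1) list.distinct(1))

lemma H_Int_L0: "H \<inter> L0 = {}"
proof -
  have False if "x \<in> H" "ws \<noteq> []" "R ws" "x = list_prod G ws" for x ws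
  proof -
    have "inv x \<in> H"
      using subgroup.m_inv_closed[OF subgroup_H that(1)] .
    then show False
      using reduced_word_mult_hd[OF _ that(2,3)] list_prod_reduced_ne_one that H_carrier
      by (metis in_mono l_inv list.distinct(1))
  qed
  then show ?thesis
    by (metis disjoint_iff starting_in_G0_iff)
qed

lemma L0_Int_L1: "L0 \<inter> L1 = {}"
proof -
  have False if x0: "x \<in> L0" and x1: "x \<in> L1" for x
  proof -
    obtain ws where ws: "x = list_prod G ws" "ws \<noteq> []" "R ws" "hd ws \<in> G0"
      using x0 starting_in_G0_iff by auto
    obtain vs where vs: "x = list_prod G vs" "vs \<noteq> []" "R vs" "hd vs \<in> G1"
      using x1 starting_in_G1_iff by auto
    have "hd vs \<in> carrier G" "hd vs \<notin> G0" "hd ws \<notin> G1"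
      using letters_carrier[OF vs(3)] letter_in_G0_iff[OF vs(3)] letter_in_G0_iff[OF ws(3)]
        hd_in_set[OF vs(2)] hd_in_set[OF ws(2)] vs(4) ws(4) by auto
    then have "R (inv_word vs @ ws)"
      using reduced_inv_word[OF vs(3)] ws(3) inv_word_hd_last[OF vs(2)]
        subgroup_inv_iff[OF subgroup_G0]
      by (simp add: reduced_word_append)
    moreover have "list_prod G (inv_word vs @ ws) = \<one>"
      using vs ws letters_carrier[OF vs(3)] letters_carrier[OF ws(3)]
        letters_carrier[OF reduced_inv_word[OF vs(3)]] list_prod_closed
      by (simp add: list_prod_inv_word list_prod_append)
    ultimately show False
      using list_prod_reduced_ne_one inv_word_hd_last[OF vs(2)] by simp
  qed
  then show ?thesis
    by auto
qed

lemma G0_mult_in_L0: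
  assumes "a \<in> G0" and "a \<notin> H" and "y \<in> H \<union> L1"
  shows "a \<otimes> y \<in> L0"
  using assms(3)
proof
  assume y: "y \<in> H"
  then have "a \<otimes> y \<in> G0" and "a \<otimes> y \<notin> H"
    using subgroup.m_closed[OF subgroup_G0 assms(1)] H_eq
      subgroup_mult_right_iff[OF subgroup_H y] assms(1,2) G0_carrier by auto
  then have "R [a \<otimes> y]"
    using H_eq by (auto simp: reduced_word_Cons)
  then show ?thesis
    unfolding starting_in_G0_iff using \<open>a \<otimes> y \<in> G0\<close>
    by (intro exI[of _ "[a \<otimes> y]"]) (use y H_carrier assms(1) G0_carrier in auto)
next
  assume "y \<in> L1"
  then obtain vs where vs: "y = list_prod G vs" "vs \<noteq> []" "R vs" "hd vs \<in> G1"
    using starting_in_G1_iff by auto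
  have "hd vs \<notin> G0"
    using letter_in_G0_iff[OF vs(3) hd_in_set[OF vs(2)]] vs(4) by simp
  then have "R (a # vs)"
    using vs assms H_eq by (auto simp: reduced_word_Cons)
  then show ?thesis
    unfolding starting_in_G0_iff using vs assms(1) by (intro exI[of _ "a # vs"]) simp
qed

lemma H_mult_L1: "h \<in> H \<Longrightarrow> y \<in> L1 \<Longrightarrow> h \<otimes> y \<in> L1"
  by (rule amalgam.H_mult_L0[OF amalgam_swap])

lemma G0_mult_closed:
  assumes x: "x \<in> G0" and y: "y \<in> H \<union> L0 \<union> L1"
  shows "x \<otimes> y \<in> H \<union> L0 \<union> L1"
proof (cases "x \<in> H \<or> y \<notin> L0")
  case True
  then show ?thesis
    using y x H_mult_L0 H_mult_L1 G0_mult_in_L0 subgroup.m_closed[OF subgroup_H] by blast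
next
  case False
  then have "y \<in> L0"
    by auto
  then obtain v vs where y_eq: "y = list_prod G (v # vs)" and reduced: "R (v # vs)" and v: "v \<in> G0"
    unfolding starting_in_G0_iff by (metis list.collapse)
  have vs: "R vs" and vs_hd: "vs \<noteq> [] \<Longrightarrow> hd vs \<in> G1"
    using reduced v letter_in_G0_iff[of vs "hd vs"] by (auto simp: reduced_word_Cons)
  have "x \<in> carrier G" "v \<in> carrier G"
    using x v G0_carrier by auto
  then have prod: "x \<otimes> y = (x \<otimes> v) \<otimes> list_prod G vs"
    using y_eq list_prod_closed[OF letters_carrier[OF vs]] by (simp add: m_assoc)
  have xv: "x \<otimes> v \<in> G0"
    using subgroup.m_closed[OF subgroup_G0 x v] .
  show ?thesis
  proof (cases "x \<otimes> v \<in> H")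
    case False
    then have "R ((x \<otimes> v) # vs)"
      using reduced xv v H_eq by (auto simp: reduced_word_Cons)
    then have "x \<otimes> y \<in> L0"
      unfolding starting_in_G0_iff prod using xv by (intro exI[of _ "(x \<otimes> v) # vs"]) simp
    then show ?thesis
      by blast
  next
    case True
    show ?thesis
    proof (cases "vs = []")
      case True
      then show ?thesis
        using prod \<open>x \<otimes> v \<in> H\<close> \<open>x \<in> carrier G\<close> \<open>v \<in> carrier G\<close> by simp
    next
      case False
      then have "list_prod G vs \<in> L1"
        unfolding starting_in_G1_iff using vs vs_hd by blast
      then show ?thesis
        using H_mult_L1[OF \<open>x \<otimes> v \<in> H\<close>] prod by simp
    qed
  qed
qed

lemma carrier_eq_H_L0_L1: "carrier G = H \<union> L0 \<union> L1"
proof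
  show "H \<union> L0 \<union> L1 \<subseteq> carrier G"
    using H_carrier L0_carrier L1_carrier by blast
  have "\<forall>y \<in> H \<union> L0 \<union> L1. g \<otimes> y \<in> H \<union> L0 \<union> L1" if "g \<in> generate G (G0 \<union> G1)" for g
    using that
  proof (induction g rule: generate.induct)
    case one
    then show ?case
      using H_carrier L0_carrier L1_carrier by auto
  next
    case (incl h)
    then show ?case
      using G0_mult_closed amalgam.G0_mult_closed[OF amalgam_swap] by blast
  next
    case (inv h)
    then have "inv h \<in> G0 \<union> G1"
      using subgroup.m_inv_closed[OF subgroup_G0] subgroup.m_inv_closed[OF subgroup_G1] by auto
    then show ?case
      using G0_mult_closed amalgam.G0_mult_closed[OF amalgam_swap] by blast
  next
    case (eng h1 h2)
    have "h1 \<in> carrier G" "h2 \<in> carrier G"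
      using eng.hyps generate_in_carrier[of "G0 \<union> G1"] G0_carrier G1_carrier by auto
    show ?case
    proof
      fix y assume y: "y \<in> H \<union> L0 \<union> L1"
      then have "h1 \<otimes> h2 \<otimes> y = h1 \<otimes> (h2 \<otimes> y)"
        using \<open>h1 \<in> carrier G\<close> \<open>h2 \<in> carrier G\<close> H_carrier L0_carrier L1_carrier
        by (auto simp: m_assoc)
      then show "h1 \<otimes> h2 \<otimes> y \<in> H \<union> L0 \<union> L1"
        using eng.IH y by simp
    qed
  qed
  then show "carrier G \<subseteq> H \<union> L0 \<union> L1"
    using generate_G0_G1 subgroup.one_closed[OF subgroup_H] H_carrier by force
qed

lemma carrier_Diff_H_L1: "carrier G - (H \<union> L1) = L0"
  using carrier_eq_H_L0_L1 H_Int_L0 L0_Int_L1 by blast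

lemma list_prod_l_coset_L0:
  assumes "R ws" and "ws \<noteq> []" and "hd ws \<in> G1" and "last ws \<in> G1"
  shows "list_prod G ws <# L0 \<subseteq> L1"
proof
  fix x assume "x \<in> list_prod G ws <# L0"
  then obtain z where "z \<in> L0" and x: "x = list_prod G ws \<otimes> z"
    by (rule l_coset_memE)
  then obtain vs where vs: "z = list_prod G vs" "vs \<noteq> []" "R vs" "hd vs \<in> G0"
    using starting_in_G0_iff by auto
  have "last ws \<notin> G0" "hd vs \<notin> G1"
    using letter_in_G0_iff[OF assms(1) last_in_set[OF assms(2)]]
      letter_in_G0_iff[OF vs(3) hd_in_set[OF vs(2)]] assms(4) vs(4) by auto
  then have "R (ws @ vs)"
    using assms(1) vs(3) by (simp add: reduced_word_append)
  moreover have "x = list_prod G (ws @ vs)"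
    using x vs(1) letters_carrier[OF assms(1)] letters_carrier[OF vs(3)]
    by (simp add: list_prod_append)
  ultimately show "x \<in> L1"
    unfolding starting_in_G1_iff using assms(2,3) by (intro exI[of _ "ws @ vs"]) simp
qed

section \<open>Ping-pong\<close>

lemma G0_l_coset_H_L1: "a \<in> G0 \<Longrightarrow> a \<notin> H \<Longrightarrow> a <# (H \<union> L1) \<subseteq> L0"
  using G0_mult_in_L0 unfolding l_coset_def by auto

lemma G0_l_coset_L1: "a \<in> G0 \<Longrightarrow> a \<notin> H \<Longrightarrow> a <# L1 \<subseteq> L0"
  using G0_l_coset_H_L1 l_coset_mono[of L1 "H \<union> L1"] by blast

lemma G1_l_coset_L0: "b \<in> G1 \<Longrightarrow> b \<notin> H \<Longrightarrow> b <# L0 \<subseteq> L1"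
  by (rule amalgam.G0_l_coset_L1[OF amalgam_swap])

lemma power_l_coset_L1:
  assumes a: "a \<in> G0" "a \<notin> H" and b: "b \<in> G1" "b \<notin> H"
  shows "((b \<otimes> a) [^] (n :: nat)) <# L1 \<subseteq> L1"
proof (induction n)
  case 0
  then show ?case
    using lcos_mult_one[OF L1_carrier] by simp
next
  case (Suc n)
  have carrier: "a \<in> carrier G" "b \<in> carrier G"
    using a b G0_carrier G1_carrier by auto
  have "(b \<otimes> a) [^] Suc n = b \<otimes> (a \<otimes> (b \<otimes> a) [^] n)"
    using carrier nat_pow_Suc2[of "b \<otimes> a" n] by (simp add: m_assoc del: nat_pow_Suc)
  then have "((b \<otimes> a) [^] Suc n) <# L1 = b <# (a <# (((b \<otimes> a) [^] n) <# L1))"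
    using carrier L1_carrier by (simp add: lcos_m_assoc)
  also have "\<dots> \<subseteq> b <# (a <# L1)"
    using Suc.IH by (intro l_coset_mono)
  also have "\<dots> \<subseteq> b <# L0"
    using G0_l_coset_L1[OF a] by (rule l_coset_mono)
  also have "\<dots> \<subseteq> L1"
    using G1_l_coset_L0[OF b] .
  finally show ?case .
qed

lemma power_l_coset_L0_disjoint:
  assumes a: "a \<in> G0" "a \<notin> H" and b: "b \<in> G1" "b \<notin> H"
    and c: "c \<in> G1" "c \<notin> H" "inv b \<otimes> c \<notin> H"
  shows "(((b \<otimes> a) [^] Suc n \<otimes> c) <# L0) \<inter> (c <# L0) = {}"
proof -
  have carrier: "a \<in> carrier G" "b \<in> carrier G" "c \<in> carrier G"
    using a b c G0_carrier G1_carrier by auto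
  have "c <# L0 = b <# ((inv b \<otimes> c) <# L0)"
    using carrier L0_carrier by (simp add: lcos_m_assoc flip: m_assoc)
  also have "\<dots> \<subseteq> b <# L1"
    using G1_l_coset_L0[of "inv b \<otimes> c"] c(3)
      subgroup.m_closed[OF subgroup_G1 subgroup.m_inv_closed[OF subgroup_G1 b(1)] c(1)]
    by (intro l_coset_mono) blast
  finally have c_L0: "c <# L0 \<subseteq> b <# L1" .
  have "(b \<otimes> a) [^] Suc n \<otimes> c = b \<otimes> (a \<otimes> ((b \<otimes> a) [^] n \<otimes> c))"
    using carrier nat_pow_Suc2[of "b \<otimes> a" n] by (simp add: m_assoc del: nat_pow_Suc)
  then have "((b \<otimes> a) [^] Suc n \<otimes> c) <# L0 = b <# (a <# ((b \<otimes> a) [^] n <# (c <# L0)))"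
    using carrier L0_carrier by (simp add: lcos_m_assoc)
  also have "\<dots> \<subseteq> b <# (a <# ((b \<otimes> a) [^] n <# L1))"
    by (intro l_coset_mono) (rule G1_l_coset_L0[OF c(1,2)])
  also have "\<dots> \<subseteq> b <# L0"
    using power_l_coset_L1[OF a b, of n] G0_l_coset_L1[OF a]
    by (intro l_coset_mono) (meson dual_order.trans l_coset_mono)
  finally show ?thesis
    using c_L0 l_coset_disjoint[OF L0_Int_L1 L0_carrier L1_carrier carrier(2)] by blast
qed

lemma L0_has_disjoint_translates_if_index_G1:
  assumes a: "a \<in> G0" "a \<notin> H" and index: "3 \<le> subgroup_index G G1 H"
  shows "has_disjoint_translates G L0"
proof -
  obtain c where c: "c \<in> G1" "c \<notin> H"
    using subgroup_index_ge_2[OF subgroup_H order.trans[OF _ index]] by (auto simp: numeral_eq_enat)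
  have c_carrier: "c \<in> carrier G"
    using c G1_carrier by auto
  obtain b where b: "b \<in> G1" "b \<notin> H" "inv b \<otimes> c \<notin> H"
    using subgroup_index_ge_3[OF subgroup_H G1_carrier index c_carrier] by blast
  have ba: "b \<otimes> a \<in> carrier G"
    using a b G0_carrier G1_carrier by auto
  define g where "g i = (b \<otimes> a) [^] (i :: nat) \<otimes> c" for i
  have g_carrier: "g i \<in> carrier G" for i
    using ba c_carrier by (simp add: g_def)
  have "(g i <# L0) \<inter> (g j <# L0) = {}" if ij: "i < j" for i j
  proof -
    obtain n where j: "j = i + Suc n"
      using ij less_iff_Suc_add by auto
    have "g j <# L0 = (b \<otimes> a) [^] i <# (((b \<otimes> a) [^] Suc n \<otimes> c) <# L0)"
      using ba c_carrier L0_carrier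
      by (simp add: j g_def lcos_m_assoc nat_pow_mult[symmetric] m_assoc)
    moreover have "g i <# L0 = (b \<otimes> a) [^] i <# (c <# L0)"
      using ba c_carrier L0_carrier by (simp add: g_def lcos_m_assoc)
    ultimately show ?thesis
      using power_l_coset_L0_disjoint[OF a b(1,2) c b(3), of n] ba c_carrier L0_carrier
      by (simp add: Int_commute l_coset_disjoint l_coset_subset_G)
  qed
  then have "(g i <# L0) \<inter> (g j <# L0) = {}" if "i \<noteq> j" for i j
    using that by (metis Int_commute linorder_neqE_nat)
  then show ?thesis
    unfolding has_disjoint_translates_def using g_carrier by blast
qed

end

locale proper_amalgam = amalgam +
  assumes nondegenerate: "nondegenerate_amalgam G G0 G1 H"
begin

lemma proper_amalgam_swap: "proper_amalgam G G1 G0 H"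
  using amalgam_swap nondegenerate
  unfolding proper_amalgam_def proper_amalgam_axioms_def nondegenerate_amalgam_def
  by (simp add: mult.commute)

lemma subgroup_index_bounds:
  "2 \<le> subgroup_index G G0 H" "2 \<le> subgroup_index G G1 H"
  "3 \<le> subgroup_index G G0 H \<or> 3 \<le> subgroup_index G G1 H"
  using enat_indices_of_nondegenerate[OF nondegenerate[unfolded nondegenerate_amalgam_def]]
  by simp_all

lemma obtain_G0_letter:
  obtains a where "a \<in> G0" and "a \<notin> H"
  using subgroup_index_ge_2[OF subgroup_H subgroup_index_bounds(1)] .

lemma L0_has_disjoint_translates: "has_disjoint_translates G L0"
proof (cases "3 \<le> subgroup_index G G1 H")
  case True
  obtain a where "a \<in> G0" "a \<notin> H"
    by (rule obtain_G0_letter)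
  then show ?thesis
    using L0_has_disjoint_translates_if_index_G1 True by simp
next
  case False
  then have "3 \<le> subgroup_index G G0 H"
    using subgroup_index_bounds(3) by simp
  moreover obtain b where b: "b \<in> G1" "b \<notin> H"
    by (rule proper_amalgam.obtain_G0_letter[OF proper_amalgam_swap])
  ultimately have "has_disjoint_translates G L1"
    using amalgam.L0_has_disjoint_translates_if_index_G1[OF amalgam_swap] by simp
  moreover have "b \<in> carrier G"
    using b G1_carrier by auto
  ultimately show ?thesis
    using has_disjoint_translates_mono G1_l_coset_L0[OF b] L0_carrier by simp
qed

lemma weak_powers_partition_ping_pong:
  assumes x: "x \<in> G0" and a: "a \<in> G0" "a \<notin> H" and xa: "inv a \<otimes> x \<notin> H"
    and t: "t \<in> carrier G" "t <# L0 \<subseteq> L1"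
  shows "weak_powers_partition G (x \<otimes> t) (a <# (H \<union> L1))"
proof -
  have carrier: "x \<in> carrier G" "a \<in> carrier G"
    using x a G0_carrier by auto
  have HL1: "H \<union> L1 \<subseteq> carrier G"
    using H_carrier L1_carrier by blast
  have complement: "carrier G - (a <# (H \<union> L1)) = a <# L0"
    using l_coset_Diff_carrier[OF HL1 carrier(2)] carrier_Diff_H_L1 by simp
  have "inv a \<otimes> x \<in> G0"
    using subgroup.m_closed[OF subgroup_G0 subgroup.m_inv_closed[OF subgroup_G0 a(1)] x] .
  have "(x \<otimes> t) <# (a <# (H \<union> L1)) = x <# (t <# (a <# (H \<union> L1)))"
    using carrier t(1) l_coset_subset_G[OF HL1 carrier(2)] by (simp add: lcos_m_assoc)
  also have "\<dots> \<subseteq> x <# (t <# L0)"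
    using G0_l_coset_H_L1[OF a] by (intro l_coset_mono)
  also have "\<dots> \<subseteq> x <# L1"
    using t(2) by (rule l_coset_mono)
  also have "\<dots> = a <# ((inv a \<otimes> x) <# L1)"
    using carrier L1_carrier by (simp add: lcos_m_assoc flip: m_assoc)
  also have "\<dots> \<subseteq> a <# L0"
    using G0_l_coset_L1[OF \<open>inv a \<otimes> x \<in> G0\<close> xa] by (rule l_coset_mono)
  finally have "((x \<otimes> t) <# (a <# (H \<union> L1))) \<inter> (a <# (H \<union> L1)) = {}"
    using complement by auto
  then show ?thesis
    unfolding weak_powers_partition_def complement
    using l_coset_subset_G[OF HL1 carrier(2)]
      has_disjoint_translates_l_coset[OF L0_has_disjoint_translates L0_carrier carrier(2)]
    by simp
qed

lemma weak_powers_partition_if_L0_into_L1: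
  assumes "f \<in> carrier G" and "f <# L0 \<subseteq> L1"
  shows "\<exists>D. weak_powers_partition G f D"
proof -
  obtain a where a: "a \<in> G0" "a \<notin> H"
    by (rule obtain_G0_letter)
  then have "inv a \<otimes> \<one> \<notin> H"
    using subgroup_inv_iff[OF subgroup_H] G0_carrier by auto
  then have "weak_powers_partition G (\<one> \<otimes> f) (a <# (H \<union> L1))"
    using weak_powers_partition_ping_pong[OF subgroup.one_closed[OF subgroup_G0] a _ assms] by simp
  then show ?thesis
    using assms(1) by auto
qed

lemma weak_powers_partition_word_G0_G1:
  assumes index: "3 \<le> subgroup_index G G0 H"
    and ws: "R ws" "ws \<noteq> []" and hd_letter: "hd ws \<in> G0" and last_letter: "last ws \<in> G1"
  shows "\<exists>D. weak_powers_partition G (list_prod G ws) D"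
proof -
  obtain x vs where ws_eq: "ws = x # vs"
    using ws(2) by (cases ws) auto
  have "x \<notin> G1"
    using letter_in_G0_iff[OF ws(1)] hd_letter ws_eq by simp
  then have vs: "vs \<noteq> []" "R vs" "hd vs \<in> G1" "last vs = last ws"
    using ws(1) hd_letter last_letter letter_in_G0_iff[OF ws(1), of "hd vs"]
    by (auto simp: ws_eq reduced_word_Cons)
  have x: "x \<in> G0" "x \<in> carrier G"
    using hd_letter ws_eq G0_carrier by auto
  obtain a where a: "a \<in> G0" "a \<notin> H" "inv a \<otimes> x \<notin> H"
    using subgroup_index_ge_3[OF subgroup_H G0_carrier index x(2)] by blast
  have "list_prod G vs <# L0 \<subseteq> L1"
    using list_prod_l_coset_L0[OF vs(2,1,3)] vs(4) last_letter by simp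
  then have "weak_powers_partition G (x \<otimes> list_prod G vs) (a <# (H \<union> L1))"
    using weak_powers_partition_ping_pong[OF x(1) a] list_prod_closed[OF letters_carrier[OF vs(2)]]
    by simp
  then show ?thesis
    using ws_eq by auto
qed

lemma weak_powers_partition_word:
  assumes index: "3 \<le> subgroup_index G G0 H" and ws: "R ws" "ws \<noteq> []"
  shows "\<exists>D. weak_powers_partition G (list_prod G ws) D"
proof -
  have f: "list_prod G ws \<in> carrier G"
    using list_prod_closed[OF letters_carrier[OF ws(1)]] .
  have hd_letter: "hd ws \<in> G0 \<longleftrightarrow> hd ws \<notin> G1"
    and last_letter: "last ws \<in> G0 \<longleftrightarrow> last ws \<notin> G1"
    using letter_in_G0_iff[OF ws(1)] hd_in_set[OF ws(2)] last_in_set[OF ws(2)] by auto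
  consider "hd ws \<in> G1" "last ws \<in> G1" | "hd ws \<in> G0" "last ws \<in> G0"
    | "hd ws \<in> G0" "last ws \<in> G1" | "hd ws \<in> G1" "last ws \<in> G0"
    using hd_letter last_letter by blast
  then show ?thesis
  proof cases
    case 1
    then show ?thesis
      using weak_powers_partition_if_L0_into_L1[OF f] list_prod_l_coset_L0[OF ws] by simp
  next
    case 2
    then have "list_prod G ws <# L1 \<subseteq> L0"
      using amalgam.list_prod_l_coset_L0[OF amalgam_swap] ws by (simp add: reduced_word_swap)
    then show ?thesis
      using proper_amalgam.weak_powers_partition_if_L0_into_L1[OF proper_amalgam_swap f] by simp
  next
    case 3
    then show ?thesis
      using weak_powers_partition_word_G0_G1[OF index ws] by simp
  next
    case 4
    have "set ws \<subseteq> carrier G"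
      using letters_carrier[OF ws(1)] .
    then have "hd (inv_word ws) \<in> G0" "last (inv_word ws) \<in> G1"
      using 4 inv_word_hd_last[OF ws(2)] subgroup_inv_iff[OF subgroup_G0]
        subgroup_inv_iff[OF subgroup_G1] hd_in_set[OF ws(2)] last_in_set[OF ws(2)] by auto
    then obtain D where "weak_powers_partition G (inv (list_prod G ws)) D"
      using weak_powers_partition_word_G0_G1[OF index reduced_inv_word[OF ws(1)]]
        inv_word_hd_last[OF ws(2)] list_prod_inv_word[OF \<open>set ws \<subseteq> carrier G\<close>] by auto
    then show ?thesis
      using weak_powers_partition_inv[of "inv (list_prod G ws)"] f by auto
  qed
qed

lemma weak_powers_partition_outside_H:
  assumes "f \<in> carrier G" and "f \<notin> H"
  shows "\<exists>D. weak_powers_partition G f D"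
proof -
  have "f \<in> L0 \<or> f \<in> L1"
    using assms carrier_eq_H_L0_L1 by auto
  then obtain ws where ws: "f = list_prod G ws" "ws \<noteq> []" "R ws"
    using starting_in_G0_iff starting_in_G1_iff by auto
  show ?thesis
  proof (cases "3 \<le> subgroup_index G G0 H")
    case True
    then show ?thesis
      using weak_powers_partition_word ws by simp
  next
    case False
    then have "3 \<le> subgroup_index G G1 H"
      using subgroup_index_bounds(3) by simp
    then show ?thesis
      using proper_amalgam.weak_powers_partition_word[OF proper_amalgam_swap] ws
      by (simp add: reduced_word_swap)
  qed
qed

lemma weak_star_powers_if_trivial_kernel:
  assumes "amalgam_kernel G H = {\<one>}"
  shows "weak_star_powers G"
proof (rule weak_star_powersI)
  fix f assume f: "f \<in> carrier G" "f \<noteq> \<one>"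
  obtain g where g: "g \<in> carrier G" "f \<notin> (g <# H) #> inv g"
    using f assms unfolding amalgam_kernel_def by auto
  then have "inv g \<otimes> f \<otimes> g \<notin> H"
    using conj_in_conj_coset f(1) by blast
  moreover have "inv g \<otimes> f \<otimes> g \<in> carrier G"
    using g(1) f(1) by simp
  ultimately obtain D where "weak_powers_partition G (inv g \<otimes> f \<otimes> g) D"
    using weak_powers_partition_outside_H by blast
  then show "\<exists>D. weak_powers_partition G f D"
    using weak_powers_partition_conj g(1) f(1) by blast
qed

end

theorem proposition5p5:
  fixes G :: "('a, 'b) monoid_scheme" and G0 G1 H :: "'a set"
  assumes "amalgamated_product G G0 G1 H"
    and "nondegenerate_amalgam G G0 G1 H"
    and "amalgam_kernel G H = {\<one>\<^bsub>G\<^esub>}"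
  shows "weak_star_powers G"
proof -
  have "group G"
    using assms(1) unfolding amalgamated_product_def by simp
  then interpret proper_amalgam G G0 G1 H
    using assms(1,2) by (intro proper_amalgam.intro amalgam.intro amalgam_axioms.intro
        proper_amalgam_axioms.intro)
  show ?thesis
    using weak_star_powers_if_trivial_kernel assms(3) by simp
qed

end
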